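(* Let $(Q,\lambda)$ be an $\mathcal{R}$-characteristic pair on an admissible $n$-dimensional simple polytope $Q$ with $\ell$ vertices. Assume that for every term $B_i$ with $\dim B_i>1$ occurring in any retraction sequence of $Q$, $$\gcd\{g_{B_i}(v)\mid v\text{ a free vertex of }B_i\}=1.$$ Then for every prime $p$ there exists a retraction sequence $\{(B_i,E_i,b_i)\}_{i=1}^{\ell}$ of $Q$ with $\gcd\{p,g_{E_i}(b_i)\}=1$ for all $i=1,\dots,\ell$ (so $X(Q,\lambda)$ satisfies the hypothesis of Theorem 1.2 via the induced building sequence).
   Context: $Q$ is an $n$-dimensional simple convex polytope with facets $F_1,\dots,F_m$; $\lambda:\{F_1,\dots,F_m\}\to\mathbb{Z}^n$ is an $\mathcal{R}$-characteristic function, i.e. $\{\lambda(F_{i_1}),\dots,\lambda(F_{i_k})\}$ is linearly independent whenever $F_{i_1}\cap\cdots\cap F_{i_k}\ne\emptyset$. For a codimension-$k$ face $E=F_{i_1}\cap\cdots\cap F_{i_k}$, let $\rho_E:\mathbb{Z}^n\to\mathbb{Z}^n/\big((\mathrm{span}_{\mathbb{Z}}\{\lambda(F_{i_1}),\dots,\lambda(F_{i_k})\}\otimes\mathbb{R})\cap\mathbb{Z}^n\big)\cong\mathbb{Z}^{n-k}$, and for each facet $E\cap F_j\ne\emptyset$ ($j\notin\{i_1,\dots,i_k\}$) of $E$ let $\lambda_E(E\cap F_j)$ be the primitive vector in the direction of $\rho_E(\lambda(F_j))$. For a vertex $v=\bigcap_{s=1}^{n-k}(E\cap F_{j_s})$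 of $E$, $g_E(v)=|\det[\lambda_E(E\cap F_{j_1})^t,\dots,\lambda_E(E\cap F_{j_{n-k}})^t]|$ ($=1$ if $E=\{v\}$). A retraction sequence for $Q$ is a sequence of triples $(B_k,E_k,b_k)$, $k=1,\dots,\ell$: $B_1=E_1=Q$ and $b_1$ a vertex of $Q$; $B_k$ is the union of all faces of $B_{k-1}$ not containing $b_{k-1}$; $b_k$ is a free vertex of $B_k$, i.e. a vertex with a neighbourhood in $B_k$ homeomorphic as a manifold with corners to $\mathbb{R}^d_{\ge0}$ for some $d$, and $E_k$ is the unique $d$-dimensional face of $B_k$ containing $b_k$; the sequence ends with $B_\ell=E_\ell=\{b_\ell\}$. For a free vertex $v$ of such a $B_i$ with associated $d$-dimensional face $E$, write $g_{B_i}(v):=g_E(v)$. $Q$ is admissible if every complex $B_k$ obtained in this way (for any choices of free vertices) has at least one free vertex. *)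

theory Defs
  imports "HOL-Analysis.Analysis" "Jordan_Normal_Form.Determinant"
begin

(* Points of the polytope live in an abstract Euclidean space 'a, n = DIM('a).
   Facets are enumerated as F 0, ..., F (m-1); the characteristic function
   is lam :: nat => int vec (lam i = lambda(F i), an integer vector of dimension n). *)

definition nonempty_faces :: "'a::euclidean_space set \<Rightarrow> 'a set set" where
  "nonempty_faces Q = {G. G face_of Q \<and> G \<noteq> {}}"

definition is_vertex :: "'a::euclidean_space set \<Rightarrow> 'a \<Rightarrow> bool" where
  "is_vertex Q v \<longleftrightarrow> {v} face_of Q"

definition simple_polytope :: "'a::euclidean_space set \<Rightarrow> bool" where
  "simple_polytope Q \<longleftrightarrow> polytope Q \<and> aff_dim Q = int DIM('a) \<and>
     (\<forall>v. is_vertex Q v \<longrightarrow> card {G. G facet_of Q \<and> v \<in> G} = DIM('a))"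

definition lin_indep_family :: "nat \<Rightarrow> (nat \<Rightarrow> int vec) \<Rightarrow> nat set \<Rightarrow> bool" where
  "lin_indep_family n lam S \<longleftrightarrow>
     (\<forall>c :: nat \<Rightarrow> real.
        (\<forall>j<n. (\<Sum>i\<in>S. c i * real_of_int (vec_index (lam i) j)) = 0) \<longrightarrow> (\<forall>i\<in>S. c i = 0))"

definition R_characteristic ::
  "'a::euclidean_space set \<Rightarrow> nat \<Rightarrow> (nat \<Rightarrow> 'a set) \<Rightarrow> (nat \<Rightarrow> int vec) \<Rightarrow> bool" where
  "R_characteristic Q m F lam \<longleftrightarrow>
     bij_betw F {..<m} {G. G facet_of Q} \<and>
     (\<forall>i<m. lam i \<in> carrier_vec DIM('a)) \<and>
     (\<forall>S\<subseteq>{..<m}. (\<Inter>i\<in>S. F i) \<inter> Q \<noteq> {} \<longrightarrow> lin_indep_family DIM('a) lam S)"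

definition facet_idx :: "nat \<Rightarrow> (nat \<Rightarrow> 'a set) \<Rightarrow> 'a set \<Rightarrow> nat set" where
  "facet_idx m F E = {i. i < m \<and> E \<subseteq> F i}"

definition sat_lattice :: "nat \<Rightarrow> nat \<Rightarrow> (nat \<Rightarrow> 'a set) \<Rightarrow> (nat \<Rightarrow> int vec) \<Rightarrow> 'a set \<Rightarrow> int vec set" where
  "sat_lattice n m F lam E = {x \<in> carrier_vec n. \<exists>c :: nat \<Rightarrow> real.
      \<forall>j<n. real_of_int (vec_index x j) = (\<Sum>i\<in>facet_idx m F E. c i * real_of_int (vec_index (lam i) j))}"

(* rho is a surjective Z-linear map Z^n -> Z^(n-k) with kernel the saturated lattice,
   i.e. the quotient map Z^n -> Z^n / L_E composed with an identification with Z^(n-k) *)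
definition is_rho :: "nat \<Rightarrow> nat \<Rightarrow> (nat \<Rightarrow> 'a set) \<Rightarrow> (nat \<Rightarrow> int vec) \<Rightarrow> 'a set \<Rightarrow> (int vec \<Rightarrow> int vec) \<Rightarrow> bool" where
  "is_rho n m F lam E \<rho> \<longleftrightarrow>
     (let k = card (facet_idx m F E) in
       (\<forall>x\<in>carrier_vec n. \<forall>y\<in>carrier_vec n. \<rho> (x + y) = \<rho> x + \<rho> y) \<and>
       (\<forall>x\<in>carrier_vec n. \<forall>c. \<rho> (c \<cdot>\<^sub>v x) = c \<cdot>\<^sub>v \<rho> x) \<and>
       \<rho> ` carrier_vec n = carrier_vec (n - k) \<and>
       {x \<in> carrier_vec n. \<rho> x = 0\<^sub>v (n - k)} = sat_lattice n m F lam E)"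

definition rho :: "nat \<Rightarrow> nat \<Rightarrow> (nat \<Rightarrow> 'a set) \<Rightarrow> (nat \<Rightarrow> int vec) \<Rightarrow> 'a set \<Rightarrow> int vec \<Rightarrow> int vec" where
  "rho n m F lam E = (SOME \<rho>. is_rho n m F lam E \<rho>)"

definition primitive_dir :: "int vec \<Rightarrow> int vec" where
  "primitive_dir w = map_vec (\<lambda>x. x div Gcd (set\<^sub>v w)) w"

(* g_E(v) = |det[lambda_E(E \<inter> F_j) : v \<in> F_j, E \<not>\<subseteq> F_j]|  (= 1 if E = {v}) *)
definition g_face :: "nat \<Rightarrow> nat \<Rightarrow> (nat \<Rightarrow> 'a set) \<Rightarrow> (nat \<Rightarrow> int vec) \<Rightarrow> 'a set \<Rightarrow> 'a \<Rightarrow> nat" where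
  "g_face n m F lam E v =
     nat \<bar>det (mat_of_rows (n - card (facet_idx m F E))
        (map (\<lambda>j. primitive_dir (rho n m F lam E (lam j)))
           (sorted_list_of_set {j. j < m \<and> v \<in> F j \<and> \<not> E \<subseteq> F j})))\<bar>"

(* A complex B (union of faces of Q) is represented by the set of nonempty faces of Q it contains.
   v is a free vertex of B with associated face E: every face of B containing v is a face of E. *)
definition free_vertex :: "'a set set \<Rightarrow> 'a \<Rightarrow> 'a set \<Rightarrow> bool" where
  "free_vertex B v E \<longleftrightarrow> {v} \<in> B \<and> E \<in> B \<and> v \<in> E \<and> (\<forall>G\<in>B. v \<in> G \<longrightarrow> G \<subseteq> E)"

definition g_complex :: "nat \<Rightarrow> nat \<Rightarrow> (nat \<Rightarrow> 'a set) \<Rightarrow> (nat \<Rightarrow> int vec) \<Rightarrow> 'a set set \<Rightarrow> 'a \<Rightarrow> nat" where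
  "g_complex n m F lam B v = g_face n m F lam (THE E. free_vertex B v E) v"

definition retract :: "'a set set \<Rightarrow> 'a \<Rightarrow> 'a set set" where
  "retract B b = {G \<in> B. b \<notin> G}"

(* retraction sequence as a list of triples (B_k, E_k, b_k), k = 1..l  (list index k-1) *)
definition retraction_seq :: "'a::euclidean_space set \<Rightarrow> ('a set set \<times> 'a set \<times> 'a) list \<Rightarrow> bool" where
  "retraction_seq Q rs \<longleftrightarrow> rs \<noteq> [] \<and>
     fst (rs ! 0) = nonempty_faces Q \<and> fst (snd (rs ! 0)) = Q \<and>
     (\<forall>i<length rs. free_vertex (fst (rs ! i)) (snd (snd (rs ! i))) (fst (snd (rs ! i)))) \<and>
     (\<forall>i. Suc i < length rs \<longrightarrow> fst (rs ! Suc i) = retract (fst (rs ! i)) (snd (snd (rs ! i)))) \<and>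
     fst (last rs) = {{snd (snd (last rs))}} \<and> fst (snd (last rs)) = {snd (snd (last rs))}"

inductive_set reachable_complexes :: "'a::euclidean_space set \<Rightarrow> 'a set set set" for Q where
  start: "nonempty_faces Q \<in> reachable_complexes Q"
| step: "B \<in> reachable_complexes Q \<Longrightarrow> free_vertex B b E \<Longrightarrow> retract B b \<noteq> {} \<Longrightarrow>
         retract B b \<in> reachable_complexes Q"

definition admissible :: "'a::euclidean_space set \<Rightarrow> bool" where
  "admissible Q \<longleftrightarrow> (\<forall>B\<in>reachable_complexes Q. \<exists>v E. free_vertex B v E)"

definition complex_dim_gt1 :: "'a::euclidean_space set set \<Rightarrow> bool" where
  "complex_dim_gt1 B \<longleftrightarrow> (\<exists>G\<in>B. aff_dim G > 1)"

end

theory Submission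
  imports Defs
begin

text \<open>Fix a prime \<open>p\<close> and build the retraction sequence greedily, always retracting a free
  vertex \<open>v\<close> whose \<open>g(v)\<close> is prime to \<open>p\<close>. Such a vertex exists in every complex \<open>B\<close> reached
  in this way. If \<open>dim B > 1\<close>, then \<open>B\<close> occurs in some retraction sequence (the retractions
  leading to \<open>B\<close>, completed by admissibility), so the gcd hypothesis provides it. If
  \<open>dim B \<le> 1\<close>, the face of any free vertex is a vertex or an edge, and there \<open>g = 1\<close>: for a
  vertex the determinant is empty; for an edge \<open>E\<close> at \<open>v\<close> of a simple polytope, \<open>E\<close> lies in
  exactly \<open>n - 1\<close> facets and exactly one further facet passes through \<open>v\<close>, so \<open>\<rho>\<^sub>E\<close> maps
  onto \<open>\<int>\<close> and the single primitive vector \<open>\<lambda>\<^sub>E\<close> is \<open>\<plusminus>1\<close>.\<close>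

section \<open>Primitive integer functionals\<close>

lemma Gcd_image_lessThan_lincomb:
  fixes a :: "nat \<Rightarrow> int"
  obtains y where "(\<Sum>j<n. y j * a j) = Gcd (a ` {..<n})"
proof -
  have "\<exists>y. (\<Sum>j<n. y j * a j) = Gcd (a ` {..<n})"
  proof (induction n)
    case (Suc n)
    then obtain y where y: "(\<Sum>j<n. y j * a j) = Gcd (a ` {..<n})" by blast
    obtain u v where uv: "u * a n + v * Gcd (a ` {..<n}) = gcd (a n) (Gcd (a ` {..<n}))"
      using bezout_int by blast
    define y' where "y' j = (if j = n then u else v * y j)" for j
    have "(\<Sum>j<Suc n. y' j * a j) = v * (\<Sum>j<n. y j * a j) + u * a n"
      by (simp add: y'_def sum_distrib_left mult.assoc)
    also have "\<dots> = Gcd (a ` {..<Suc n})"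
      using y uv by (simp add: lessThan_Suc Gcd_insert algebra_simps)
    finally show ?case by blast
  qed simp
  then show ?thesis using that by blast
qed

text \<open>Dividing the coefficients by their gcd keeps the kernel and, by Bezout, makes the
  functional onto \<open>\<int>\<close>.\<close>
lemma exists_rank_one_quotient_map:
  fixes C :: "nat \<Rightarrow> int"
  assumes "\<exists>j<n. C j \<noteq> 0"
  obtains \<rho> :: "int vec \<Rightarrow> int vec"
  where "\<forall>x\<in>carrier_vec n. \<forall>y\<in>carrier_vec n. \<rho> (x + y) = \<rho> x + \<rho> y"
    and "\<forall>x\<in>carrier_vec n. \<forall>c. \<rho> (c \<cdot>\<^sub>v x) = c \<cdot>\<^sub>v \<rho> x"
    and "\<rho> ` carrier_vec n = carrier_vec 1"
    and "{x \<in> carrier_vec n. \<rho> x = 0\<^sub>v 1} = {x \<in> carrier_vec n. (\<Sum>j<n. x $ j * C j) = 0}"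
proof -
  define g where "g = Gcd (C ` {..<n})"
  have "g \<noteq> 0" using assms by (auto simp: g_def Gcd_0_iff)
  define w where "w j = C j div g" for j
  have C_eq: "j < n \<Longrightarrow> C j = g * w j" for j
    by (simp add: w_def g_def Gcd_dvd)
  obtain y where "(\<Sum>j<n. y j * C j) = g" using Gcd_image_lessThan_lincomb unfolding g_def by blast
  then have "g * (\<Sum>j<n. y j * w j) = g * 1"
    by (simp add: C_eq sum_distrib_left algebra_simps)
  then have y: "(\<Sum>j<n. y j * w j) = 1" using \<open>g \<noteq> 0\<close> by simp
  define \<rho> where "\<rho> x = vec 1 (\<lambda>_. \<Sum>j<n. x $ j * w j)" for x :: "int vec"
  show ?thesis
  proof
    show "\<forall>x\<in>carrier_vec n. \<forall>z\<in>carrier_vec n. \<rho> (x + z) = \<rho> x + \<rho> z"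
      by (auto intro!: eq_vecI simp: \<rho>_def sum.distrib algebra_simps)
    show "\<forall>x\<in>carrier_vec n. \<forall>c. \<rho> (c \<cdot>\<^sub>v x) = c \<cdot>\<^sub>v \<rho> x"
      by (auto intro!: eq_vecI simp: \<rho>_def sum_distrib_left algebra_simps)
    show "\<rho> ` carrier_vec n = carrier_vec 1"
    proof (intro equalityI subsetI)
      fix z :: "int vec" assume z: "z \<in> carrier_vec 1"
      have "\<rho> ((z $ 0) \<cdot>\<^sub>v vec n y) = z"
        using z y by (intro eq_vecI) (auto simp: \<rho>_def sum_distrib_left[symmetric] mult.assoc)
      then show "z \<in> \<rho> ` carrier_vec n" by (metis image_eqI smult_carrier_vec vec_carrier)
    qed (auto simp: \<rho>_def)
    have "\<rho> x = 0\<^sub>v 1 \<longleftrightarrow> (\<Sum>j<n. x $ j * w j) = 0" for x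
      by (auto simp: \<rho>_def vec_eq_iff)
    moreover have "(\<Sum>j<n. x $ j * C j) = g * (\<Sum>j<n. x $ j * w j)" for x
      by (simp add: C_eq sum_distrib_left algebra_simps)
    ultimately show "{x \<in> carrier_vec n. \<rho> x = 0\<^sub>v 1} = {x \<in> carrier_vec n. (\<Sum>j<n. x $ j * C j) = 0}"
      using \<open>g \<noteq> 0\<close> by auto
  qed
qed

lemma det_last_row_expansion:
  fixes r :: "nat \<Rightarrow> nat \<Rightarrow> 'b::comm_ring_1"
  assumes "n \<ge> 1"
  defines "M \<equiv> \<lambda>x. mat n n (\<lambda>(i,j). if i < n - 1 then r i j else x j)"
  shows "det (M x) = (\<Sum>j<n. x j * cofactor (M (\<lambda>_. 0)) (n - 1) j)"
proof -
  have "det (M x) = (\<Sum>j<n. M x $$ (n - 1, j) * cofactor (M x) (n - 1) j)"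
    by (rule laplace_expansion_row) (use assms in \<open>auto simp: M_def\<close>)
  also have "\<dots> = (\<Sum>j<n. x j * cofactor (M (\<lambda>_. 0)) (n - 1) j)"
  proof (rule sum.cong[OF refl])
    fix j assume "j \<in> {..<n}"
    moreover have "mat_delete (M x) (n - 1) j = mat_delete (M (\<lambda>_. 0)) (n - 1) j"
      by (rule eq_matI) (auto simp: mat_delete_def M_def)
    ultimately show "M x $$ (n - 1, j) * cofactor (M x) (n - 1) j = x j * cofactor (M (\<lambda>_. 0)) (n - 1) j"
      using assms by (simp add: cofactor_def M_def)
  qed
  finally show ?thesis .
qed

lemma last_row_transpose_mult_vec:
  fixes r :: "nat \<Rightarrow> nat \<Rightarrow> 'b::comm_ring_1"
  assumes "n \<ge> 1" "j < n" "u \<in> carrier_vec n"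
  shows "((mat n n (\<lambda>(i,j). if i < n - 1 then r i j else x j))\<^sup>T *\<^sub>v u) $ j =
    (\<Sum>i<n - 1. u $ i * r i j) + u $ (n - 1) * x j"
proof -
  obtain k where n: "n = Suc k" using assms(1) by (cases n) auto
  show ?thesis using assms(2,3) by (simp add: n scalar_prod_def atLeast0LessThan mult.commute)
qed

lemma in_span_if_last_row_transpose_kernel:
  fixes r :: "nat \<Rightarrow> nat \<Rightarrow> 'b::field"
  assumes n: "n \<ge> 1"
    and indep: "\<And>u. \<forall>j<n. (\<Sum>i<n - 1. u i * r i j) = 0 \<Longrightarrow> \<forall>i<n - 1. u i = 0"
    and u: "u \<in> carrier_vec n" "u \<noteq> 0\<^sub>v n"
      "(mat n n (\<lambda>(i,j). if i < n - 1 then r i j else x j))\<^sup>T *\<^sub>v u = 0\<^sub>v n"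
  shows "\<exists>c. \<forall>j<n. x j = (\<Sum>i<n - 1. c i * r i j)"
proof -
  have rel: "(\<Sum>i<n - 1. u $ i * r i j) = - (u $ (n - 1) * x j)" if "j < n" for j
  proof -
    have "((mat n n (\<lambda>(i,j). if i < n - 1 then r i j else x j))\<^sup>T *\<^sub>v u) $ j = 0"
      using u(3) that by simp
    then show ?thesis
      using last_row_transpose_mult_vec[OF n that u(1)] by (simp add: eq_neg_iff_add_eq_0)
  qed
  have last: "u $ (n - 1) \<noteq> 0"
  proof
    assume "u $ (n - 1) = 0"
    moreover have "\<forall>i<n - 1. u $ i = 0" using rel \<open>u $ (n - 1) = 0\<close> by (intro indep) simp
    ultimately have "u $ i = 0" if "i < n" for i
      using that by (cases "i = n - 1") auto
    then have "u = 0\<^sub>v n" using u(1) by (intro eq_vecI) auto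
    with u(2) show False ..
  qed
  have "x j = (\<Sum>i<n - 1. - u $ i / u $ (n - 1) * r i j)" if "j < n" for j
    using rel[OF that] last by (simp add: sum_divide_distrib[symmetric] sum_negf)
  then show ?thesis by (intro exI[of _ "\<lambda>i. - u $ i / u $ (n - 1)"]) blast
qed

lemma last_row_transpose_kernel_if_in_span:
  fixes r :: "nat \<Rightarrow> nat \<Rightarrow> 'b::field"
  assumes n: "n \<ge> 1" and c: "\<forall>j<n. x j = (\<Sum>i<n - 1. c i * r i j)"
  obtains u where "u \<in> carrier_vec n" "u \<noteq> 0\<^sub>v n"
    "(mat n n (\<lambda>(i,j). if i < n - 1 then r i j else x j))\<^sup>T *\<^sub>v u = 0\<^sub>v n"
proof -
  define u :: "'b vec" where "u = vec n (\<lambda>i. if i < n - 1 then c i else -1)"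
  have u: "u \<in> carrier_vec n" "u $ (n - 1) = -1" using n by (simp_all add: u_def)
  then have "u $ (n - 1) \<noteq> 0\<^sub>v n $ (n - 1)" using n by simp
  then have "u \<noteq> 0\<^sub>v n" by metis
  moreover have "(mat n n (\<lambda>(i,j). if i < n - 1 then r i j else x j))\<^sup>T *\<^sub>v u = 0\<^sub>v n"
  proof (rule eq_vecI)
    fix j assume "j < dim_vec (0\<^sub>v n :: 'b vec)"
    then have j: "j < n" by simp
    have "(\<Sum>i<n - 1. u $ i * r i j) = (\<Sum>i<n - 1. c i * r i j)" by (simp add: u_def)
    then show "((mat n n (\<lambda>(i,j). if i < n - 1 then r i j else x j))\<^sup>T *\<^sub>v u) $ j = 0\<^sub>v n $ j"
      using last_row_transpose_mult_vec[OF n j u(1)] u(2) c j by simp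
  qed simp
  ultimately show ?thesis using u(1) that by blast
qed

lemma det_last_row_eq_0_iff_in_span:
  fixes r :: "nat \<Rightarrow> nat \<Rightarrow> 'b::field"
  assumes n: "n \<ge> 1"
    and indep: "\<And>u. \<forall>j<n. (\<Sum>i<n - 1. u i * r i j) = 0 \<Longrightarrow> \<forall>i<n - 1. u i = 0"
  shows "det (mat n n (\<lambda>(i,j). if i < n - 1 then r i j else x j)) = 0 \<longleftrightarrow>
         (\<exists>c. \<forall>j<n. x j = (\<Sum>i<n - 1. c i * r i j))"
    (is "det ?M = 0 \<longleftrightarrow> _")
proof -
  have "det ?M\<^sup>T = det ?M" by (rule det_transpose[OF mat_carrier])
  then have "det ?M = 0 \<longleftrightarrow> det ?M\<^sup>T = 0" by simp
  also have "\<dots> \<longleftrightarrow> (\<exists>u. u \<in> carrier_vec n \<and> u \<noteq> 0\<^sub>v n \<and> ?M\<^sup>T *\<^sub>v u = 0\<^sub>v n)"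
    by (rule det_0_iff_vec_prod_zero_field) simp
  also have "\<dots> \<longleftrightarrow> (\<exists>c. \<forall>j<n. x j = (\<Sum>i<n - 1. c i * r i j))"
  proof
    assume "\<exists>u. u \<in> carrier_vec n \<and> u \<noteq> 0\<^sub>v n \<and> ?M\<^sup>T *\<^sub>v u = 0\<^sub>v n"
    then show "\<exists>c. \<forall>j<n. x j = (\<Sum>i<n - 1. c i * r i j)"
      using in_span_if_last_row_transpose_kernel[OF n indep] by blast
  next
    assume "\<exists>c. \<forall>j<n. x j = (\<Sum>i<n - 1. c i * r i j)"
    then obtain c where "\<forall>j<n. x j = (\<Sum>i<n - 1. c i * r i j)" by blast
    then obtain u where "u \<in> carrier_vec n" "u \<noteq> 0\<^sub>v n" "?M\<^sup>T *\<^sub>v u = 0\<^sub>v n"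
      by (rule last_row_transpose_kernel_if_in_span[OF n])
    then show "\<exists>u. u \<in> carrier_vec n \<and> u \<noteq> 0\<^sub>v n \<and> ?M\<^sup>T *\<^sub>v u = 0\<^sub>v n" by blast
  qed
  finally show ?thesis .
qed

lemma ex_lincomb_reindex_bij_betw:
  fixes f :: "nat \<Rightarrow> nat \<Rightarrow> 'b::semiring_0"
  assumes s: "bij_betw s {..<k} S"
  shows "(\<exists>c. \<forall>j<n. y j = (\<Sum>i<k. c i * f (s i) j)) \<longleftrightarrow> (\<exists>c. \<forall>j<n. y j = (\<Sum>i\<in>S. c i * f i j))"
proof
  assume "\<exists>c. \<forall>j<n. y j = (\<Sum>i<k. c i * f (s i) j)"
  then obtain c where c: "\<forall>j<n. y j = (\<Sum>i<k. c i * f (s i) j)" by blast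
  define c' where "c' = c \<circ> inv_into {..<k} s"
  have "(\<Sum>i<k. c i * f (s i) j) = (\<Sum>i\<in>S. c' i * f i j)" for j
    using s by (simp add: c'_def sum.reindex_bij_betw[OF s, symmetric] bij_betw_inv_into_left)
  then show "\<exists>c. \<forall>j<n. y j = (\<Sum>i\<in>S. c i * f i j)" using c by (intro exI[of _ c']) simp
next
  assume "\<exists>c. \<forall>j<n. y j = (\<Sum>i\<in>S. c i * f i j)"
  then obtain c where c: "\<forall>j<n. y j = (\<Sum>i\<in>S. c i * f i j)" by blast
  then have "\<forall>j<n. y j = (\<Sum>i<k. c (s i) * f (s i) j)"
    by (simp add: sum.reindex_bij_betw[OF s, symmetric])
  then show "\<exists>c. \<forall>j<n. y j = (\<Sum>i<k. c i * f (s i) j)" by (rule exI[of _ "\<lambda>i. c (s i)"])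
qed

lemma lin_indep_family_reindex_bij_betw:
  fixes lam :: "nat \<Rightarrow> int vec"
  assumes s: "bij_betw s {..<k} S" and indep: "lin_indep_family n lam S"
    and u: "\<forall>j<n. (\<Sum>i<k. u i * real_of_int (lam (s i) $ j)) = 0"
  shows "\<forall>i<k. u i = 0"
proof -
  define c where "c = u \<circ> inv_into {..<k} s"
  have "(\<Sum>i\<in>S. c i * real_of_int (lam i $ j)) = (\<Sum>i<k. u i * real_of_int (lam (s i) $ j))" for j
    using s by (simp add: c_def sum.reindex_bij_betw[OF s, symmetric] bij_betw_inv_into_left)
  then have zero: "\<forall>i\<in>S. c i = 0"
    using u indep[unfolded lin_indep_family_def, rule_format, of c] by simp
  show ?thesis
  proof (intro allI impI)
    fix i assume "i < k"
    then have "s i \<in> S" and "c (s i) = u i"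
      using bij_betwE[OF s] bij_betw_inv_into_left[OF s] by (auto simp: c_def)
    then show "u i = 0" using zero by simp
  qed
qed

text \<open>The functional is \<open>x \<mapsto> det\<close> of the matrix whose rows are the \<open>lam i\<close>, \<open>i \<in> S\<close>,
  followed by \<open>x\<close>; its coefficients are cofactors, hence integers.\<close>
lemma exists_int_functional_vanishing_exactly_on_span:
  fixes lam :: "nat \<Rightarrow> int vec"
  assumes n: "n \<ge> 1" and S: "finite S" "card S = n - 1" and indep: "lin_indep_family n lam S"
  obtains C :: "nat \<Rightarrow> int" where "\<And>x. (\<Sum>j<n. x $ j * C j) = 0 \<longleftrightarrow>
      (\<exists>c. \<forall>j<n. real_of_int (x $ j) = (\<Sum>i\<in>S. c i * real_of_int (lam i $ j)))"
proof -
  obtain s where s: "bij_betw s {..<n - 1} S"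
    using ex_bij_betw_nat_finite[OF S(1)] S(2) by (auto simp: atLeast0LessThan)
  define M where "M y = mat n n (\<lambda>(i,j). if i < n - 1 then lam (s i) $ j else y j)" for y
  define C where "C j = cofactor (M (\<lambda>_. 0)) (n - 1) j" for j
  have "(\<Sum>j<n. x $ j * C j) = 0 \<longleftrightarrow>
      (\<exists>c. \<forall>j<n. real_of_int (x $ j) = (\<Sum>i\<in>S. c i * real_of_int (lam i $ j)))" for x
  proof -
    let ?R = "mat n n (\<lambda>(i,j). if i < n - 1 then real_of_int (lam (s i) $ j) else real_of_int (x $ j))"
    have "map_mat real_of_int (M (\<lambda>j. x $ j)) = ?R"
      by (rule eq_matI) (auto simp: M_def)
    then have "det ?R = real_of_int (det (M (\<lambda>j. x $ j)))"
      by (metis of_int_hom.hom_det)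
    also have "det (M (\<lambda>j. x $ j)) = (\<Sum>j<n. x $ j * C j)"
      unfolding C_def M_def by (rule det_last_row_expansion[OF n])
    finally have "(\<Sum>j<n. x $ j * C j) = 0 \<longleftrightarrow> det ?R = 0"
      by (simp only: of_int_eq_0_iff)
    also have "\<dots> \<longleftrightarrow> (\<exists>c. \<forall>j<n. real_of_int (x $ j) = (\<Sum>i<n - 1. c i * real_of_int (lam (s i) $ j)))"
      using lin_indep_family_reindex_bij_betw[OF s indep] by (intro det_last_row_eq_0_iff_in_span[OF n]) blast
    also have "\<dots> \<longleftrightarrow> (\<exists>c. \<forall>j<n. real_of_int (x $ j) = (\<Sum>i\<in>S. c i * real_of_int (lam i $ j)))"
      by (rule ex_lincomb_reindex_bij_betw[OF s])
    finally show ?thesis .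
  qed
  then show ?thesis using that by blast
qed

section \<open>Facets around a vertex of a simple polytope\<close>

lemma exists_nonzero_orthogonal:
  fixes X :: "'a::euclidean_space set"
  assumes "dim X < DIM('a)"
  obtains d where "d \<noteq> 0" "\<And>y. y \<in> X \<Longrightarrow> y \<bullet> d = 0"
proof -
  obtain d where "d \<noteq> 0" "\<And>y. y \<in> span X \<Longrightarrow> real_inner_class.orthogonal d y"
    using orthogonal_to_subspace_exists[OF assms] by blast
  then show ?thesis
    using that span_base by (metis real_inner_class.orthogonal_def inner_commute)
qed

lemma aff_dim_ge_2_if_independent_directions:
  fixes v u1 u2 :: "'a::euclidean_space"
  assumes "v \<in> E" "v + u1 \<in> E" "v + u2 \<in> E" and "u2 \<noteq> 0" "u1 \<notin> span {u2}"
  shows "2 \<le> aff_dim E"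
proof -
  define V where "V = (\<lambda>x. x - v) ` E"
  have "u1 \<in> V" "u2 \<in> V"
    using assms(2,3) unfolding V_def by (metis add_diff_cancel_left' image_eqI)+
  moreover have "u1 \<noteq> u2" using assms(5) span_base by blast
  moreover have "independent {u1, u2}"
    using assms(4,5) by (simp add: independent_insert)
  ultimately have "2 \<le> dim V"
    using independent_card_le_dim[of "{u1, u2}" V] by auto
  moreover have "aff_dim E = int (dim V)"
    unfolding V_def by (rule aff_dim_eq_dim_subtract[OF hull_inc[OF assms(1)]])
  ultimately show ?thesis by simp
qed

locale full_dim_halfspace_rep =
  fixes Q :: "'a::euclidean_space set" and H :: "'a set set"
    and a :: "'a set \<Rightarrow> 'a" and b :: "'a set \<Rightarrow> real"
  assumes finite_H: "finite H"
    and Q_eq: "Q = \<Inter>H"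
    and halfspace: "\<And>h. h \<in> H \<Longrightarrow> a h \<noteq> 0 \<and> h = {x. a h \<bullet> x \<le> b h}"
    and irredundant: "\<And>H'. H' \<subset> H \<Longrightarrow> Q \<subset> \<Inter>H'"
    and full_dim: "affine hull Q = UNIV"
begin

definition facet_hyperplane :: "'a set \<Rightarrow> 'a set" where
  "facet_hyperplane h = Q \<inter> {x. a h \<bullet> x = b h}"

definition active :: "'a \<Rightarrow> 'a set set" where
  "active v = {h \<in> H. a h \<bullet> v = b h}"

lemma mem_Q_iff: "x \<in> Q \<longleftrightarrow> (\<forall>h\<in>H. a h \<bullet> x \<le> b h)"
proof -
  have "x \<in> Q \<longleftrightarrow> (\<forall>h\<in>H. x \<in> h)" using Q_eq by blast
  also have "\<dots> \<longleftrightarrow> (\<forall>h\<in>H. a h \<bullet> x \<le> b h)" using halfspace by blast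
  finally show ?thesis .
qed

lemma polyhedron_Q: "polyhedron Q"
  unfolding polyhedron_def using finite_H Q_eq halfspace by blast

lemma Q_neq_singleton: "Q \<noteq> {v}"
proof
  assume "Q = {v}"
  then have "(UNIV :: 'a set) = {v}" using full_dim by simp
  moreover obtain e :: 'a where "e \<in> Basis" using nonempty_Basis by blast
  then have "v + e \<noteq> v" using nonzero_Basis by simp
  ultimately show False by blast
qed

lemma Q_eq_affine_hull_Inter: "Q = affine hull Q \<inter> \<Inter>H"
  using Q_eq full_dim by simp

lemma Q_psubset_affine_hull_Inter: "H' \<subset> H \<Longrightarrow> Q \<subset> affine hull Q \<inter> \<Inter>H'"
  using irredundant full_dim by simp

lemma facet_of_iff: "G facet_of Q \<longleftrightarrow> (\<exists>h\<in>H. G = facet_hyperplane h)"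
  using facet_of_polyhedron_explicit
      [OF finite_H Q_eq_affine_hull_Inter halfspace Q_psubset_affine_hull_Inter]
  unfolding facet_hyperplane_def by blast

lemma exists_strictly_feasible:
  obtains x where "x \<in> Q" "\<forall>h\<in>H. a h \<bullet> x < b h"
proof -
  have "Q \<noteq> {}" using full_dim by auto
  then have "rel_interior Q \<noteq> {}"
    using rel_interior_eq_empty polyhedron_imp_convex[OF polyhedron_Q] by blast
  then show ?thesis
    using that rel_interior_polyhedron_explicit
        [OF finite_H Q_eq_affine_hull_Inter halfspace Q_psubset_affine_hull_Inter]
    by blast
qed

lemma exists_point_on_single_facet:
  assumes "h \<in> H"
  obtains w where "w \<in> Q" "a h \<bullet> w = b h" "\<forall>h'\<in>H - {h}. a h' \<bullet> w < b h'"
proof -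
  obtain x where x: "x \<in> Q" "\<forall>h\<in>H. a h \<bullet> x < b h" by (rule exists_strictly_feasible)
  obtain z where z: "z \<in> \<Inter>(H - {h})" "z \<notin> Q"
    using irredundant[of "H - {h}"] assms by blast
  have z_le: "\<forall>h'\<in>H - {h}. a h' \<bullet> z \<le> b h'" using z(1) halfspace by blast
  then have z_gt: "a h \<bullet> z > b h"
    using z(2) unfolding mem_Q_iff by (metis DiffI not_le singletonD)
  have x_lt: "a h \<bullet> x < b h" using x assms by blast
  define t where "t = (b h - a h \<bullet> x) / (a h \<bullet> z - a h \<bullet> x)"
  have t: "0 < t" "t < 1" using x_lt z_gt by (auto simp: t_def field_simps)
  define w where "w = x + t *\<^sub>R (z - x)"
  have aw: "a h' \<bullet> w = (1 - t) * (a h' \<bullet> x) + t * (a h' \<bullet> z)" for h'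
    by (simp add: w_def inner_add_right inner_diff_right algebra_simps)
  have "a h \<bullet> w = a h \<bullet> x + t * (a h \<bullet> z - a h \<bullet> x)"
    unfolding aw by (simp add: algebra_simps)
  also have "t * (a h \<bullet> z - a h \<bullet> x) = b h - a h \<bullet> x"
    using x_lt z_gt by (simp add: t_def)
  finally have w_eq: "a h \<bullet> w = b h" by simp
  have w_lt: "\<forall>h'\<in>H - {h}. a h' \<bullet> w < b h'"
  proof
    fix h' assume h': "h' \<in> H - {h}"
    have "(1 - t) * (a h' \<bullet> x) < (1 - t) * b h'" using x h' t by simp
    moreover have "t * (a h' \<bullet> z) \<le> t * b h'" using z_le h' t by (simp add: mult_left_mono)
    ultimately show "a h' \<bullet> w < b h'" unfolding aw by (simp add: algebra_simps)
  qed
  have "w \<in> Q" unfolding mem_Q_iff using w_eq w_lt by force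
  with w_eq w_lt show ?thesis using that by blast
qed

lemma inj_on_facet_hyperplane: "inj_on facet_hyperplane H"
proof (rule inj_onI)
  fix h1 h2 assume h: "h1 \<in> H" "h2 \<in> H" and eq: "facet_hyperplane h1 = facet_hyperplane h2"
  obtain w where w: "w \<in> Q" "a h1 \<bullet> w = b h1" "\<forall>h'\<in>H - {h1}. a h' \<bullet> w < b h'"
    using exists_point_on_single_facet[OF h(1)] by blast
  have "w \<in> facet_hyperplane h1" using w by (simp add: facet_hyperplane_def)
  then have "w \<in> facet_hyperplane h2" using eq by simp
  then have "a h2 \<bullet> w = b h2" by (simp add: facet_hyperplane_def)
  then show "h1 = h2" using w(3) h(2) by (metis DiffI less_irrefl singletonD)
qed

lemma card_facets_with:
  "card {G. G facet_of Q \<and> P G} = card {h \<in> H. P (facet_hyperplane h)}"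
proof -
  have "{G. G facet_of Q \<and> P G} = facet_hyperplane ` {h \<in> H. P (facet_hyperplane h)}"
    unfolding facet_of_iff by blast
  then show ?thesis
    using card_image[OF inj_on_subset[OF inj_on_facet_hyperplane]] by simp
qed

lemma mem_face_if_on_its_facets:
  assumes "E face_of Q" "E \<noteq> {}" "E \<noteq> Q" "u \<in> Q"
    and "\<And>h. h \<in> H \<Longrightarrow> E \<subseteq> facet_hyperplane h \<Longrightarrow> a h \<bullet> u = b h"
  shows "u \<in> E"
proof -
  have "u \<in> G" if G: "G facet_of Q" "E \<subseteq> G" for G
  proof -
    obtain h where h: "h \<in> H" "G = facet_hyperplane h"
      using G(1)[unfolded facet_of_iff] by blast
    have "E \<subseteq> facet_hyperplane h" using G(2) h(2) by simp
    then have "a h \<bullet> u = b h" using assms(5)[OF h(1)] by simp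
    then show "u \<in> G" unfolding h(2) facet_hyperplane_def using assms(4) by simp
  qed
  then have "u \<in> \<Inter>{G. G facet_of Q \<and> E \<subseteq> G}" by (intro InterI) simp
  moreover have "\<Inter>{G. G facet_of Q \<and> E \<subseteq> G} \<subseteq> E"
    by (rule equalityD2[OF face_of_polyhedron[OF polyhedron_Q assms(1-3)]])
  ultimately show ?thesis by blast
qed

lemma eq_vertex_if_on_active:
  assumes "{v} face_of Q" "u \<in> Q" "\<forall>h\<in>active v. a h \<bullet> u = b h"
  shows "u = v"
proof -
  have "u \<in> {v}"
  proof (rule mem_face_if_on_its_facets[OF assms(1) _ Q_neq_singleton[symmetric] assms(2)])
    fix h assume "h \<in> H" "{v} \<subseteq> facet_hyperplane h"
    then have "h \<in> active v" by (simp add: active_def facet_hyperplane_def)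
    then show "a h \<bullet> u = b h" using assms(3) by blast
  qed simp
  then show ?thesis by simp
qed

lemma step_into_Q:
  assumes "v \<in> Q" "\<And>h. h \<in> active v \<Longrightarrow> a h \<bullet> d \<le> 0"
  obtains t where "t > 0" "v + t *\<^sub>R d \<in> Q"
proof -
  have "a h \<bullet> v < b h" if "h \<in> H - active v" for h
    using assms(1) that unfolding mem_Q_iff active_def by force
  moreover have "((\<lambda>t. a h \<bullet> (v + t *\<^sub>R d)) \<longlongrightarrow> a h \<bullet> v) (at_right 0)" for h
    by (auto intro!: tendsto_eq_intros)
  ultimately have "\<forall>\<^sub>F t in at_right 0. a h \<bullet> (v + t *\<^sub>R d) < b h" if "h \<in> H - active v" for h
    using that order_tendstoD(2) by blast
  then have "\<forall>\<^sub>F t in at_right 0. t > 0 \<and> (\<forall>h\<in>H - active v. a h \<bullet> (v + t *\<^sub>R d) < b h)"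
    using finite_H by (intro eventually_conj eventually_at_right_less eventually_ball_finite) auto
  from eventually_happens'[OF trivial_limit_at_right_real this]
  obtain t where t: "t > 0" "\<forall>h\<in>H - active v. a h \<bullet> (v + t *\<^sub>R d) < b h"
    by blast
  have "a h \<bullet> (v + t *\<^sub>R d) \<le> b h" if "h \<in> active v" for h
    using assms(2)[OF that] that t(1) by (simp add: active_def inner_add_right mult_nonneg_nonpos)
  with t have "v + t *\<^sub>R d \<in> Q"
    unfolding mem_Q_iff by (metis Diff_iff less_eq_real_def)
  with t(1) show ?thesis using that by blast
qed

lemma span_active_vertex:
  assumes "{v} face_of Q"
  shows "span (a ` active v) = UNIV"
proof (rule ccontr)
  assume "span (a ` active v) \<noteq> UNIV"
  then have "dim (a ` active v) < DIM('a)"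
    by (metis dim_UNIV dim_eq_full dim_subset_UNIV le_neq_implies_less)
  then obtain d where d: "d \<noteq> 0" "\<And>y. y \<in> a ` active v \<Longrightarrow> y \<bullet> d = 0"
    by (rule exists_nonzero_orthogonal) blast
  have d0: "a h \<bullet> d = 0" if "h \<in> active v" for h
    using d(2)[OF imageI[OF that]] .
  have "v \<in> Q" using assms face_of_imp_subset by blast
  moreover have d_le: "a h \<bullet> d \<le> 0" if "h \<in> active v" for h
    using d0[OF that] by simp
  ultimately obtain t where t: "t > 0" "v + t *\<^sub>R d \<in> Q"
    by (rule step_into_Q)
  have "\<forall>h\<in>active v. a h \<bullet> (v + t *\<^sub>R d) = b h"
    using d0 by (simp add: active_def inner_add_right)
  then have "v + t *\<^sub>R d = v" using eq_vertex_if_on_active[OF assms t(2)] by blast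
  then show False using t(1) d(1) by simp
qed

lemma exists_edge_direction:
  assumes "{v} face_of Q" "card (active v) = DIM('a)" "h1 \<in> active v"
  obtains d where "a h1 \<bullet> d < 0" "\<forall>h\<in>active v - {h1}. a h \<bullet> d = 0"
proof -
  have "finite (active v)" using finite_H by (simp add: active_def)
  then have "card (a ` (active v - {h1})) \<le> DIM('a) - 1"
    using assms(2,3) card_image_le[of "active v - {h1}" a] by (simp add: card_Diff_singleton)
  then have "card (a ` (active v - {h1})) < DIM('a)"
    using DIM_positive[where 'a='a] by linarith
  moreover have "dim (a ` (active v - {h1})) \<le> card (a ` (active v - {h1}))"
    using \<open>finite (active v)\<close> by (intro dim_le_card') simp
  ultimately have "dim (a ` (active v - {h1})) < DIM('a)" by linarith
  then obtain d where d: "d \<noteq> 0" "\<And>y. y \<in> a ` (active v - {h1}) \<Longrightarrow> y \<bullet> d = 0"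
    by (rule exists_nonzero_orthogonal) blast
  have d0: "a h \<bullet> d = 0" if "h \<in> active v - {h1}" for h
    using d(2)[OF imageI[OF that]] .
  have "a h1 \<bullet> d \<noteq> 0"
  proof
    assume "a h1 \<bullet> d = 0"
    then have "\<forall>y\<in>a ` active v. real_inner_class.orthogonal d y"
      using d0 by (auto simp: real_inner_class.orthogonal_def inner_commute)
    then have "real_inner_class.orthogonal d d"
      using orthogonal_to_span[of d "a ` active v" d] span_active_vertex[OF assms(1)] by auto
    with d(1) show False by (simp add: real_inner_class.orthogonal_def)
  qed
  show ?thesis
  proof (cases "a h1 \<bullet> d < 0")
    case True
    then show ?thesis using d0 by (intro that) auto
  next
    case False
    then have "a h1 \<bullet> (- d) < 0" using \<open>a h1 \<bullet> d \<noteq> 0\<close> by simp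
    moreover have "\<forall>h\<in>active v - {h1}. a h \<bullet> (- d) = 0" using d0 by simp
    ultimately show ?thesis by (rule that)
  qed
qed

lemma exists_step_into_face:
  assumes v: "{v} face_of Q" "card (active v) = DIM('a)"
    and E: "E face_of Q" "E \<noteq> Q" "v \<in> E"
    and h: "h \<in> active v" "\<not> E \<subseteq> facet_hyperplane h"
  obtains u where "v + u \<in> E" "a h \<bullet> u < 0" "\<forall>h'\<in>active v - {h}. a h' \<bullet> u = 0"
proof -
  have vQ: "v \<in> Q" using v(1) face_of_imp_subset by blast
  obtain d where d: "a h \<bullet> d < 0" "\<forall>h'\<in>active v - {h}. a h' \<bullet> d = 0"
    using exists_edge_direction[OF v h(1)] by blast
  have "a h' \<bullet> d \<le> 0" if "h' \<in> active v" for h'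
    using d that by (cases "h' = h") auto
  then obtain t where t: "t > 0" "v + t *\<^sub>R d \<in> Q"
    by (rule step_into_Q[OF vQ])
  have "v + t *\<^sub>R d \<in> E"
  proof (rule mem_face_if_on_its_facets[OF E(1) _ E(2) t(2)])
    show "E \<noteq> {}" using E(3) by blast
  next
    fix h' assume h': "h' \<in> H" "E \<subseteq> facet_hyperplane h'"
    then have "h' \<in> active v - {h}"
      using E(3) h(2) by (auto simp: active_def facet_hyperplane_def)
    then show "a h' \<bullet> (v + t *\<^sub>R d) = b h'"
      using d(2) by (simp add: active_def inner_add_right)
  qed
  moreover have "a h \<bullet> (t *\<^sub>R d) < 0" "\<forall>h'\<in>active v - {h}. a h' \<bullet> (t *\<^sub>R d) = 0"
    using t(1) d by (simp_all add: mult_pos_neg)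
  ultimately show ?thesis by (rule that)
qed

text \<open>If every active facet contained \<open>E\<close>, then \<open>E = {v}\<close>; two active facets missing \<open>E\<close>
  would give two independent directions of \<open>E\<close> at \<open>v\<close>.\<close>
lemma card_active_not_containing_edge:
  assumes v: "{v} face_of Q" "card (active v) = DIM('a)"
    and E: "E face_of Q" "E \<noteq> Q" "v \<in> E" "aff_dim E = 1"
  shows "card {h \<in> active v. \<not> E \<subseteq> facet_hyperplane h} = 1"
proof -
  define T where "T = {h \<in> active v. \<not> E \<subseteq> facet_hyperplane h}"
  have "T \<noteq> {}"
  proof
    assume "T = {}"
    then have "\<forall>h\<in>active v. a h \<bullet> y = b h" if "y \<in> E" for y
      using that by (auto simp: T_def facet_hyperplane_def)
    then have "E \<subseteq> {v}"
      using eq_vertex_if_on_active[OF v(1)] face_of_imp_subset[OF E(1)] by blast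
    then have "E = {v}" using E(3) by blast
    then show False using E(4) by simp
  qed
  moreover have "h1 = h2" if h1: "h1 \<in> T" and h2: "h2 \<in> T" for h1 h2
  proof (rule ccontr)
    assume "h1 \<noteq> h2"
    obtain u1 where u1: "v + u1 \<in> E" "a h1 \<bullet> u1 < 0"
      using exists_step_into_face[OF v E(1-3)] h1 unfolding T_def by blast
    obtain u2 where u2: "v + u2 \<in> E" "a h2 \<bullet> u2 < 0" "\<forall>h'\<in>active v - {h2}. a h' \<bullet> u2 = 0"
      using exists_step_into_face[OF v E(1-3)] h2 unfolding T_def by blast
    have "a h1 \<bullet> u2 = 0" using u2(3) h1 \<open>h1 \<noteq> h2\<close> by (simp add: T_def)
    have "u2 \<noteq> 0" using u2(2) by auto
    moreover have "u1 \<notin> span {u2}"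
    proof
      assume "u1 \<in> span {u2}"
      then obtain k where "u1 = k *\<^sub>R u2" by (auto simp: span_singleton)
      then show False using u1(2) \<open>a h1 \<bullet> u2 = 0\<close> by simp
    qed
    ultimately have "2 \<le> aff_dim E"
      by (rule aff_dim_ge_2_if_independent_directions[OF E(3) u1(1) u2(1)])
    with E(4) show False by simp
  qed
  ultimately obtain h where "T = {h}" by blast
  then show ?thesis by (simp add: T_def[symmetric])
qed


lemma card_facets_at_edge:
  assumes v: "{v} face_of Q" "card (active v) = DIM('a)"
    and E: "E face_of Q" "E \<noteq> Q" "v \<in> E" "aff_dim E = 1"
  shows "card {G. G facet_of Q \<and> E \<subseteq> G} = DIM('a) - 1 \<and>
    card {G. G facet_of Q \<and> v \<in> G \<and> \<not> E \<subseteq> G} = 1"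
proof -
  define T where "T = {h \<in> active v. \<not> E \<subseteq> facet_hyperplane h}"
  have "v \<in> Q" using v face_of_imp_subset by blast
  then have active_eq: "active v = {h \<in> H. v \<in> facet_hyperplane h}"
    by (auto simp: active_def facet_hyperplane_def)
  have "card T = 1"
    unfolding T_def by (rule card_active_not_containing_edge[OF v E])
  moreover have "{h \<in> H. E \<subseteq> facet_hyperplane h} = active v - T"
    using E(3) by (auto simp: T_def active_eq)
  moreover have "{h \<in> H. v \<in> facet_hyperplane h \<and> \<not> E \<subseteq> facet_hyperplane h} = T"
    by (auto simp: T_def active_eq)
  moreover have "card (active v - T) = card (active v) - card T"
    using finite_H by (intro card_Diff_subset) (auto simp: active_def T_def)
  ultimately show ?thesis
    using v(2) card_facets_with[of "\<lambda>G. E \<subseteq> G"] card_facets_with[of "\<lambda>G. v \<in> G \<and> \<not> E \<subseteq> G"]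
    by simp
qed

end

lemma polyhedron_full_dim_halfspace_rep:
  fixes Q :: "'a::euclidean_space set"
  assumes "polyhedron Q" "affine hull Q = UNIV"
  obtains H a b where "full_dim_halfspace_rep Q H a b"
proof -
  obtain H where H: "finite H" "Q = affine hull Q \<inter> \<Inter>H"
      "\<And>h. h \<in> H \<Longrightarrow> \<exists>a b. a \<noteq> 0 \<and> h = {x. a \<bullet> x \<le> b}"
      "\<And>H'. H' \<subset> H \<Longrightarrow> Q \<subset> affine hull Q \<inter> \<Inter>H'"
    using assms(1) by (simp add: polyhedron_Int_affine_minimal) meson
  then obtain a b where "\<And>h. h \<in> H \<Longrightarrow> a h \<noteq> 0 \<and> h = {x. a h \<bullet> x \<le> b h}"
    by metis
  with H assms(2) have "full_dim_halfspace_rep Q H a b"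
    by unfold_locales auto
  then show ?thesis by (rule that)
qed

lemma simple_polytope_edge_facets:
  fixes Q :: "'a::euclidean_space set"
  assumes Q: "simple_polytope Q" and v: "{v} face_of Q"
    and E: "E face_of Q" "v \<in> E" "aff_dim E = 1"
  shows "card {G. G facet_of Q \<and> E \<subseteq> G} = DIM('a) - 1"
    and "card {G. G facet_of Q \<and> v \<in> G \<and> \<not> E \<subseteq> G} = 1"
proof -
  have "polyhedron Q" and aff_Q: "aff_dim Q = DIM('a)"
    and card_v: "card {G. G facet_of Q \<and> v \<in> G} = DIM('a)"
    using Q v polytope_imp_polyhedron by (auto simp: simple_polytope_def is_vertex_def)
  then have full: "affine hull Q = UNIV" by (simp add: aff_dim_eq_full)
  obtain H a b where "full_dim_halfspace_rep Q H a b"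
    using polyhedron_full_dim_halfspace_rep[OF \<open>polyhedron Q\<close> full] by blast
  then interpret full_dim_halfspace_rep Q H a b .
  have "card {G. G facet_of Q \<and> E \<subseteq> G} = DIM('a) - 1 \<and>
        card {G. G facet_of Q \<and> v \<in> G \<and> \<not> E \<subseteq> G} = 1"
  proof (cases "E = Q")
    case True
    then have "DIM('a) = 1" using E(3) aff_Q by simp
    moreover have "\<not> (G facet_of Q \<and> Q \<subseteq> G)" for G
      using facet_of_imp_subset[of G Q] facet_of_irrefl[of Q] by auto
    then have "{G. G facet_of Q \<and> E \<subseteq> G} = {}"
      and "{G. G facet_of Q \<and> v \<in> G \<and> \<not> E \<subseteq> G} = {G. G facet_of Q \<and> v \<in> G}"
      using True by blast+
    ultimately show ?thesis using card_v by (simp only: card.empty) simp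
  next
    case False
    have "v \<in> Q" using v face_of_imp_subset by blast
    then have "{h \<in> H. v \<in> facet_hyperplane h} = active v"
      by (auto simp: active_def facet_hyperplane_def)
    then have "card (active v) = DIM('a)"
      using card_v card_facets_with[of "\<lambda>G. v \<in> G"] by simp
    then show ?thesis by (rule card_facets_at_edge[OF v _ E(1) False E(2,3)])
  qed
  then show "card {G. G facet_of Q \<and> E \<subseteq> G} = DIM('a) - 1"
    and "card {G. G facet_of Q \<and> v \<in> G \<and> \<not> E \<subseteq> G} = 1"
    by auto
qed

section \<open>The invariant \<open>g\<close> on vertices and edges\<close>

lemma card_facet_indices:
  assumes "bij_betw F {..<m} {G. G facet_of Q}"
  shows "card {i. i < m \<and> P (F i)} = card {G. G facet_of Q \<and> P G}"
proof -
  have F_im: "F ` {..<m} = {G. G facet_of Q}" and "inj_on F {..<m}"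
    using assms by (auto simp: bij_betw_def)
  have inj: "inj_on F {i. i < m \<and> P (F i)}"
    using \<open>inj_on F {..<m}\<close> by (rule inj_on_subset) auto
  have "{G. G facet_of Q \<and> P G} = {G \<in> F ` {..<m}. P G}" using F_im by auto
  also have "\<dots> = F ` {i. i < m \<and> P (F i)}" by auto
  finally show ?thesis using card_image[OF inj] by simp
qed

lemma not_in_span_if_lin_indep_insert:
  fixes lam :: "nat \<Rightarrow> int vec"
  assumes indep: "lin_indep_family n lam (insert j S)" and "j \<notin> S" "finite S"
  shows "\<not> (\<exists>c. \<forall>k<n. real_of_int (lam j $ k) = (\<Sum>i\<in>S. c i * real_of_int (lam i $ k)))"
proof
  assume "\<exists>c. \<forall>k<n. real_of_int (lam j $ k) = (\<Sum>i\<in>S. c i * real_of_int (lam i $ k))"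
  then obtain c where c: "\<forall>k<n. real_of_int (lam j $ k) = (\<Sum>i\<in>S. c i * real_of_int (lam i $ k))"
    by blast
  define c' where "c' i = (if i = j then -1 else c i)" for i
  have "(\<Sum>i\<in>insert j S. c' i * real_of_int (lam i $ k)) = 0" if "k < n" for k
  proof -
    have "(\<Sum>i\<in>S. c' i * real_of_int (lam i $ k)) = (\<Sum>i\<in>S. c i * real_of_int (lam i $ k))"
      using \<open>j \<notin> S\<close> by (intro sum.cong) (auto simp: c'_def)
    then show ?thesis using c that \<open>j \<notin> S\<close> \<open>finite S\<close> by (simp add: c'_def)
  qed
  then have "c' j = 0"
    using indep[unfolded lin_indep_family_def, rule_format, of c'] by blast
  then show False by (simp add: c'_def)
qed

lemma is_rho_rho:
  assumes n: "n \<ge> 1" and card: "card (facet_idx m F E) = n - 1"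
    and indep: "lin_indep_family n lam (facet_idx m F E)"
    and y: "y \<in> carrier_vec n" "y \<notin> sat_lattice n m F lam E"
  shows "is_rho n m F lam E (rho n m F lam E)"
proof -
  let ?S = "facet_idx m F E"
  have "finite ?S" by (simp add: facet_idx_def)
  then obtain C where C: "\<And>x. (\<Sum>j<n. x $ j * C j) = 0 \<longleftrightarrow>
      (\<exists>c. \<forall>j<n. real_of_int (x $ j) = (\<Sum>i\<in>?S. c i * real_of_int (lam i $ j)))"
    using exists_int_functional_vanishing_exactly_on_span[OF n _ card indep] by blast
  have sat: "sat_lattice n m F lam E = {x \<in> carrier_vec n. (\<Sum>j<n. x $ j * C j) = 0}"
    unfolding sat_lattice_def C by blast
  have "\<exists>j<n. C j \<noteq> 0"
  proof (rule ccontr)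
    assume "\<not> (\<exists>j<n. C j \<noteq> 0)"
    then have "(\<Sum>j<n. y $ j * C j) = 0" by simp
    with y show False by (simp add: sat)
  qed
  then obtain \<rho> where \<rho>:
      "\<forall>x\<in>carrier_vec n. \<forall>z\<in>carrier_vec n. \<rho> (x + z) = \<rho> x + \<rho> z"
      "\<forall>x\<in>carrier_vec n. \<forall>c. \<rho> (c \<cdot>\<^sub>v x) = c \<cdot>\<^sub>v \<rho> x"
      "\<rho> ` carrier_vec n = carrier_vec 1"
      "{x \<in> carrier_vec n. \<rho> x = 0\<^sub>v 1} = {x \<in> carrier_vec n. (\<Sum>j<n. x $ j * C j) = 0}"
    by (rule exists_rank_one_quotient_map) blast
  have "n - card ?S = 1" using card n by linarith
  then have "is_rho n m F lam E \<rho>"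
    unfolding is_rho_def Let_def sat using \<rho> by simp
  then show ?thesis unfolding rho_def by (rule someI[of "is_rho n m F lam E" \<rho>])
qed

lemma abs_det_primitive_dir_dim_1:
  assumes "x \<in> carrier_vec 1" "x \<noteq> 0\<^sub>v 1"
  shows "\<bar>det (mat_of_rows 1 [primitive_dir x])\<bar> = 1"
proof -
  have x: "x = vec 1 (\<lambda>_. x $ 0)" using assms(1) by (intro eq_vecI) auto
  have "x $ 0 \<noteq> 0"
  proof
    assume "x $ 0 = 0"
    then have "x = 0\<^sub>v 1" by (subst x) (simp add: zero_vec_def)
    with assms(2) show False ..
  qed
  have "set\<^sub>v x = {x $ 0}" by (subst x) (simp add: vec_set_def lessThan_Suc)
  then have "primitive_dir x $ 0 = x $ 0 div \<bar>x $ 0\<bar>"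
    using assms(1) by (simp add: primitive_dir_def)
  also have "\<dots> = (sgn (x $ 0) * \<bar>x $ 0\<bar>) div \<bar>x $ 0\<bar>" by (simp add: sgn_mult_abs)
  also have "\<dots> = sgn (x $ 0)" using \<open>x $ 0 \<noteq> 0\<close> by simp
  finally have "primitive_dir x $ 0 = sgn (x $ 0)" .
  moreover have "det (mat_of_rows 1 [primitive_dir x]) = primitive_dir x $ 0"
    by (subst det_single) (auto simp: mat_of_rows_def)
  ultimately show ?thesis using \<open>x $ 0 \<noteq> 0\<close> by (simp add: abs_sgn)
qed

lemma g_face_vertex:
  fixes Q :: "'a::euclidean_space set"
  assumes "simple_polytope Q" "R_characteristic Q m F lam" "{v} face_of Q"
  shows "g_face DIM('a) m F lam {v} v = 1"
proof -
  have "card {G. G facet_of Q \<and> v \<in> G} = DIM('a)"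
    using assms(1,3) by (simp add: simple_polytope_def is_vertex_def)
  then have "card (facet_idx m F {v}) = DIM('a)"
    using card_facet_indices[of F m Q "\<lambda>G. {v} \<subseteq> G"] assms(2)
    by (simp add: facet_idx_def R_characteristic_def)
  moreover have "{j. j < m \<and> v \<in> F j \<and> \<not> {v} \<subseteq> F j} = {}" by auto
  ultimately show ?thesis by (simp add: g_face_def det_dim_zero mat_of_rows_def)
qed

lemma g_face_eq_1_if_single_transversal_facet:
  assumes n: "n \<ge> 1" and card: "card (facet_idx m F E) = n - 1"
    and indep: "lin_indep_family n lam (facet_idx m F E)"
    and J: "{i. i < m \<and> v \<in> F i \<and> \<not> E \<subseteq> F i} = {j}"
    and lam_j: "lam j \<in> carrier_vec n" "lam j \<notin> sat_lattice n m F lam E"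
  shows "g_face n m F lam E v = 1"
proof -
  let ?\<rho> = "rho n m F lam E"
  have k: "n - card (facet_idx m F E) = 1" using n card by linarith
  have "is_rho n m F lam E ?\<rho>" by (rule is_rho_rho[OF n card indep lam_j])
  then have im: "?\<rho> ` carrier_vec n = carrier_vec 1"
    and ker: "{x \<in> carrier_vec n. ?\<rho> x = 0\<^sub>v 1} = sat_lattice n m F lam E"
    unfolding is_rho_def Let_def k by blast+
  have "?\<rho> (lam j) \<in> carrier_vec 1" using im lam_j(1) by blast
  moreover have "?\<rho> (lam j) \<noteq> 0\<^sub>v 1" using ker lam_j by blast
  ultimately have "\<bar>det (mat_of_rows 1 [primitive_dir (?\<rho> (lam j))])\<bar> = 1"
    by (rule abs_det_primitive_dir_dim_1)
  then show ?thesis by (simp add: g_face_def k J)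
qed

lemma g_face_edge:
  fixes Q :: "'a::euclidean_space set"
  assumes Q: "simple_polytope Q" and R: "R_characteristic Q m F lam"
    and E: "E face_of Q" "v \<in> E" "aff_dim E = 1" and v: "{v} face_of Q"
  shows "g_face DIM('a) m F lam E v = 1"
proof -
  let ?n = "DIM('a)" and ?S = "facet_idx m F E"
  have bij: "bij_betw F {..<m} {G. G facet_of Q}"
    and car: "\<forall>i<m. lam i \<in> carrier_vec ?n"
    and indep: "\<forall>S\<subseteq>{..<m}. (\<Inter>i\<in>S. F i) \<inter> Q \<noteq> {} \<longrightarrow> lin_indep_family ?n lam S"
    using R by (simp_all add: R_characteristic_def)
  have card_S: "card ?S = ?n - 1"
    using card_facet_indices[OF bij, of "\<lambda>G. E \<subseteq> G"] simple_polytope_edge_facets(1)[OF Q v E]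
    by (simp add: facet_idx_def)
  have "card {i. i < m \<and> v \<in> F i \<and> \<not> E \<subseteq> F i} = 1"
    using card_facet_indices[OF bij, of "\<lambda>G. v \<in> G \<and> \<not> E \<subseteq> G"] simple_polytope_edge_facets(2)[OF Q v E]
    by simp
  then obtain j where J: "{i. i < m \<and> v \<in> F i \<and> \<not> E \<subseteq> F i} = {j}"
    by (rule card_1_singletonE)
  then have j: "j < m" "v \<in> F j" "j \<notin> ?S" by (auto simp: facet_idx_def)
  have S_sub: "?S \<subseteq> {..<m}" by (auto simp: facet_idx_def)
  have "v \<in> F i" if "i \<in> insert j ?S" for i
    using that j(2) E(2) by (auto simp: facet_idx_def)
  moreover have "v \<in> Q" using v face_of_imp_subset by blast
  ultimately have "(\<Inter>i\<in>insert j ?S. F i) \<inter> Q \<noteq> {}" "(\<Inter>i\<in>?S. F i) \<inter> Q \<noteq> {}"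
    by blast+
  then have indep_jS: "lin_indep_family ?n lam (insert j ?S)" and indep_S: "lin_indep_family ?n lam ?S"
    using indep S_sub j(1) by simp_all
  have "lam j \<notin> sat_lattice ?n m F lam E"
    using not_in_span_if_lin_indep_insert[OF indep_jS j(3) finite_subset[OF S_sub]]
    unfolding sat_lattice_def by blast
  moreover have "lam j \<in> carrier_vec ?n" using car j(1) by blast
  moreover have "?n \<ge> 1" using DIM_positive[where 'a='a] by linarith
  ultimately show ?thesis
    using g_face_eq_1_if_single_transversal_facet[OF _ card_S indep_S J] by blast
qed

section \<open>Retraction sequences\<close>

lemma reachable_complex_subset_faces:
  "B \<in> reachable_complexes Q \<Longrightarrow> B \<subseteq> nonempty_faces Q"
  by (induction rule: reachable_complexes.induct) (auto simp: retract_def)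

lemma reachable_complex_face_closed:
  "B \<in> reachable_complexes Q \<Longrightarrow> G \<in> B \<Longrightarrow> G' face_of G \<Longrightarrow> G' \<noteq> {} \<Longrightarrow> G' \<in> B"
proof (induction arbitrary: G G' rule: reachable_complexes.induct)
  case start
  then show ?case by (auto simp: nonempty_faces_def intro: face_of_trans)
next
  case (step B b E)
  then have "G \<in> B" "b \<notin> G" by (auto simp: retract_def)
  then have "G' \<in> B" using step.IH step.prems(2,3) by blast
  moreover have "b \<notin> G'" using \<open>b \<notin> G\<close> step.prems(2) face_of_imp_subset by blast
  ultimately show ?case by (simp add: retract_def)
qed

lemma finite_reachable_complex:
  assumes "polytope Q" "B \<in> reachable_complexes Q"
  shows "finite B"
proof -
  have "B \<subseteq> {G. G face_of Q}"
    using reachable_complex_subset_faces[OF assms(2)] by (auto simp: nonempty_faces_def)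
  then show ?thesis using finite_polytope_faces[OF assms(1)] by (rule finite_subset)
qed

lemma free_vertex_unique: "free_vertex B v E1 \<Longrightarrow> free_vertex B v E2 \<Longrightarrow> E1 = E2"
  unfolding free_vertex_def by blast

lemma g_complex_eq_g_face: "free_vertex B v E \<Longrightarrow> g_complex n m F lam B v = g_face n m F lam E v"
  unfolding g_complex_def using free_vertex_unique by (metis the_equality)

lemma free_vertex_of_nonempty_faces:
  assumes "polytope Q" "free_vertex (nonempty_faces Q) b E"
  shows "E = Q"
proof -
  have "b \<in> Q" "E \<subseteq> Q"
    using assms(2) by (auto simp: free_vertex_def nonempty_faces_def dest: face_of_imp_subset)
  moreover have "Q \<in> nonempty_faces Q"
    using \<open>b \<in> Q\<close> face_of_refl[OF polytope_imp_convex[OF assms(1)]] by (auto simp: nonempty_faces_def)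
  ultimately show ?thesis using assms(2) by (auto simp: free_vertex_def)
qed

text \<open>A complex all of whose faces contain \<open>b\<close> contains only vertices equal to \<open>b\<close>, hence,
  by Krein--Milman, only the face \<open>{b}\<close>.\<close>
lemma reachable_complex_retract_empty:
  assumes "polytope Q" and B: "B \<in> reachable_complexes Q" and fv: "free_vertex B b E"
    and "retract B b = {}"
  shows "B = {{b}}" "E = {b}"
proof -
  have all_b: "b \<in> G" if "G \<in> B" for G
    using assms(4) that by (auto simp: retract_def)
  have "G = {b}" if G: "G \<in> B" for G
  proof -
    have "G face_of Q" "G \<noteq> {}" using reachable_complex_subset_faces[OF B] G by (auto simp: nonempty_faces_def)
    then have "polytope G" using face_of_polytope_polytope[OF assms(1)] by blast
    have "{x. x extreme_point_of G} \<subseteq> {b}"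
    proof
      fix x assume "x \<in> {x. x extreme_point_of G}"
      then have "{x} \<in> B" using reachable_complex_face_closed[OF B G] by (simp add: face_of_singleton)
      then show "x \<in> {b}" using all_b by blast
    qed
    have "G = convex hull {x. x extreme_point_of G}"
      using Krein_Milman_Minkowski polytope_imp_compact polytope_imp_convex \<open>polytope G\<close> by blast
    also have "\<dots> \<subseteq> convex hull {b}" using \<open>{x. x extreme_point_of G} \<subseteq> {b}\<close> by (rule hull_mono)
    finally have "G \<subseteq> {b}" by simp
    then show ?thesis using \<open>G \<noteq> {}\<close> by blast
  qed
  moreover have "{b} \<in> B" "E \<in> B" using fv by (auto simp: free_vertex_def)
  ultimately show "B = {{b}}" "E = {b}" by blast+
qed

inductive retraction_seq_from :: "'a set set \<Rightarrow> ('a set set \<times> 'a set \<times> 'a) list \<Rightarrow> bool" where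
  last: "retraction_seq_from {{b}} [({{b}}, {b}, b)]"
| step: "free_vertex B b E \<Longrightarrow> retraction_seq_from (retract B b) rs \<Longrightarrow>
         retraction_seq_from B ((B, E, b) # rs)"

lemma retraction_seq_from_nth:
  assumes "retraction_seq_from B rs"
  shows "rs \<noteq> [] \<and> fst (rs ! 0) = B \<and>
    (\<forall>i<length rs. free_vertex (fst (rs ! i)) (snd (snd (rs ! i))) (fst (snd (rs ! i)))) \<and>
    (\<forall>i. Suc i < length rs \<longrightarrow> fst (rs ! Suc i) = retract (fst (rs ! i)) (snd (snd (rs ! i)))) \<and>
    fst (last rs) = {{snd (snd (last rs))}} \<and> fst (snd (last rs)) = {snd (snd (last rs))}"
  using assms
proof (induction rule: retraction_seq_from.induct)
  case (last b)
  then show ?case by (simp add: free_vertex_def)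
next
  case (step B b E rs)
  have "\<forall>i<length ((B, E, b) # rs). free_vertex (fst (((B, E, b) # rs) ! i))
      (snd (snd (((B, E, b) # rs) ! i))) (fst (snd (((B, E, b) # rs) ! i)))"
    using step by (auto simp: nth_Cons split: nat.split)
  moreover have "fst (((B, E, b) # rs) ! Suc i) =
      retract (fst (((B, E, b) # rs) ! i)) (snd (snd (((B, E, b) # rs) ! i)))"
    if "Suc i < length ((B, E, b) # rs)" for i
    using step that by (cases i) auto
  ultimately show ?case using step by simp
qed

lemma retraction_seq_if_from_nonempty_faces:
  assumes "polytope Q" "retraction_seq_from (nonempty_faces Q) rs"
  shows "retraction_seq Q rs"
proof -
  note props = retraction_seq_from_nth[OF assms(2)]
  have "rs \<noteq> []" and hd: "fst (rs ! 0) = nonempty_faces Q"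
    and fv: "\<forall>i<length rs. free_vertex (fst (rs ! i)) (snd (snd (rs ! i))) (fst (snd (rs ! i)))"
    using props by blast+
  then have "free_vertex (nonempty_faces Q) (snd (snd (rs ! 0))) (fst (snd (rs ! 0)))"
    using fv[rule_format, of 0] by simp
  then have "fst (snd (rs ! 0)) = Q" by (rule free_vertex_of_nonempty_faces[OF assms(1)])
  with props show ?thesis
    unfolding retraction_seq_def by (elim conjE) (intro conjI; assumption)
qed

lemma reachable_complex_prefix:
  "B \<in> reachable_complexes Q \<Longrightarrow>
   \<exists>pre. \<forall>rs. retraction_seq_from B rs \<longrightarrow> retraction_seq_from (nonempty_faces Q) (pre @ rs)"
proof (induction rule: reachable_complexes.induct)
  case start
  show ?case by (intro exI[of _ "[]"]) simp
next
  case (step B b E)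
  then obtain pre where "\<forall>rs. retraction_seq_from B rs \<longrightarrow> retraction_seq_from (nonempty_faces Q) (pre @ rs)"
    by blast
  then show ?case
    using retraction_seq_from.step[OF step.hyps(2)] by (intro exI[of _ "pre @ [(B, E, b)]"]) simp
qed

lemma exists_retraction_seq_from:
  assumes "polytope Q"
    and good: "\<forall>B\<in>reachable_complexes Q. \<exists>v E. free_vertex B v E \<and> P B E v"
    and "B \<in> reachable_complexes Q"
  shows "\<exists>rs. retraction_seq_from B rs \<and> (\<forall>(B', E, b)\<in>set rs. P B' E b)"
  using assms(3)
proof (induction "card B" arbitrary: B rule: less_induct)
  case less
  obtain v E where vE: "free_vertex B v E" "P B E v" using good less.prems by blast
  show ?case
  proof (cases "retract B v = {}")
    case True
    then have "B = {{v}}" "E = {v}"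
      using reachable_complex_retract_empty[OF assms(1) less.prems vE(1)] by blast+
    then show ?thesis using vE(2) retraction_seq_from.last[of v] by force
  next
    case False
    then have B': "retract B v \<in> reachable_complexes Q"
      using reachable_complexes.step[OF less.prems vE(1)] by blast
    have "{v} \<in> B" "{v} \<notin> retract B v" using vE(1) by (auto simp: free_vertex_def retract_def)
    then have "retract B v \<subset> B" by (auto simp: retract_def)
    then have "card (retract B v) < card B"
      using finite_reachable_complex[OF assms(1) less.prems] by (rule psubset_card_mono[rotated])
    then obtain rs where "retraction_seq_from (retract B v) rs" "\<forall>(B', E, b)\<in>set rs. P B' E b"
      using less.hyps B' by blast
    then show ?thesis using retraction_seq_from.step[OF vE(1)] vE(2) by fastforce
  qed
qed

lemma reachable_complex_in_retraction_seq:
  assumes "polytope Q" "admissible Q" "B \<in> reachable_complexes Q"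
  obtains rs i where "retraction_seq Q rs" "i < length rs" "fst (rs ! i) = B"
proof -
  obtain rs where rs: "retraction_seq_from B rs"
    using exists_retraction_seq_from[OF assms(1) _ assms(3), of "\<lambda>_ _ _. True"] assms(2)
    unfolding admissible_def by blast
  obtain pre where "retraction_seq_from (nonempty_faces Q) (pre @ rs)"
    using reachable_complex_prefix[OF assms(3)] rs by blast
  then have "retraction_seq Q (pre @ rs)"
    by (rule retraction_seq_if_from_nonempty_faces[OF assms(1)])
  moreover have "length pre < length (pre @ rs)" "fst ((pre @ rs) ! length pre) = B"
    using retraction_seq_from_nth[OF rs] by (auto simp: nth_append)
  ultimately show ?thesis by (rule that)
qed

lemma exists_free_vertex_g_face_coprime:
  fixes p :: nat
  assumes "prime p" "Gcd {g_complex n m F lam B v | v. \<exists>E. free_vertex B v E} = 1"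
  shows "\<exists>v E. free_vertex B v E \<and> gcd p (g_face n m F lam E v) = 1"
proof (rule ccontr)
  assume none: "\<not> ?thesis"
  have "p dvd g_complex n m F lam B v" if "free_vertex B v E" for v E
    using none that prime_imp_coprime[OF assms(1)] g_complex_eq_g_face[OF that] by fastforce
  then have "p dvd Gcd {g_complex n m F lam B v | v. \<exists>E. free_vertex B v E}"
    by (auto intro: Gcd_greatest)
  with assms show False by simp
qed

lemma g_face_free_vertex_low_dim:
  fixes Q :: "'a::euclidean_space set"
  assumes "simple_polytope Q" "R_characteristic Q m F lam"
    and B: "B \<in> reachable_complexes Q" "\<not> complex_dim_gt1 B" and fv: "free_vertex B v E"
  shows "g_face DIM('a) m F lam E v = 1"
proof -
  have "E \<in> B" "{v} \<in> B" "v \<in> E" using fv by (auto simp: free_vertex_def)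
  then have E: "E face_of Q" "E \<noteq> {}" and v: "{v} face_of Q"
    using reachable_complex_subset_faces[OF B(1)] by (auto simp: nonempty_faces_def)
  have "aff_dim E \<le> 1" using B(2) \<open>E \<in> B\<close> by (auto simp: complex_dim_gt1_def)
  moreover have "aff_dim E \<ge> 0" using E(2) aff_dim_negative_iff[of E] by linarith
  ultimately consider "aff_dim E = 0" | "aff_dim E = 1" by linarith
  then show ?thesis
  proof cases
    case 1
    then obtain w where "E = {w}" using aff_dim_eq_0 by blast
    then have "E = {v}" using \<open>v \<in> E\<close> by simp
    then show ?thesis using g_face_vertex[OF assms(1,2) v] by simp
  next
    case 2
    then show ?thesis using g_face_edge[OF assms(1,2) E(1) \<open>v \<in> E\<close> _ v] by simp
  qed
qed

lemma reachable_complex_has_free_vertex_prime_to: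
  fixes Q :: "'a::euclidean_space set" and p :: nat
  assumes Q: "simple_polytope Q" "R_characteristic Q m F lam" "admissible Q"
    and gcd_one: "\<forall>rs i. retraction_seq Q rs \<and> i < length rs \<and> complex_dim_gt1 (fst (rs ! i)) \<longrightarrow>
           Gcd {g_complex DIM('a) m F lam (fst (rs ! i)) v | v. \<exists>E. free_vertex (fst (rs ! i)) v E} = 1"
    and p: "prime p" and B: "B \<in> reachable_complexes Q"
  shows "\<exists>v E. free_vertex B v E \<and> gcd p (g_face DIM('a) m F lam E v) = 1"
proof (cases "complex_dim_gt1 B")
  case True
  have "polytope Q" using Q(1) by (simp add: simple_polytope_def)
  then obtain rs i where rs: "retraction_seq Q rs" "i < length rs" and B_eq: "fst (rs ! i) = B"
    using reachable_complex_in_retraction_seq Q(3) B by metis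
  have "Gcd {g_complex DIM('a) m F lam B v | v. \<exists>E. free_vertex B v E} = 1"
    using gcd_one[rule_format, of rs i] rs True unfolding B_eq by blast
  then show ?thesis by (rule exists_free_vertex_g_face_coprime[OF p])
next
  case False
  obtain v E where fv: "free_vertex B v E" using Q(3) B by (auto simp: admissible_def)
  then have "g_face DIM('a) m F lam E v = 1"
    by (rule g_face_free_vertex_low_dim[OF Q(1,2) B False])
  then show ?thesis using fv by (intro exI[of _ v] exI[of _ E]) simp
qed

theorem mainTheorem7:
  fixes Q :: "'a::euclidean_space set"
    and m :: nat and F :: "nat \<Rightarrow> 'a set" and lam :: "nat \<Rightarrow> int vec"
  assumes "simple_polytope Q"
    and "R_characteristic Q m F lam"
    and "admissible Q"
    and "\<forall>rs i. retraction_seq Q rs \<and> i < length rs \<and> complex_dim_gt1 (fst (rs ! i)) \<longrightarrow>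
           Gcd {g_complex DIM('a) m F lam (fst (rs ! i)) v | v. \<exists>E. free_vertex (fst (rs ! i)) v E} = 1"
  shows "\<forall>p::nat. prime p \<longrightarrow>
           (\<exists>rs. retraction_seq Q rs \<and>
              (\<forall>i<length rs. gcd p (g_face DIM('a) m F lam (fst (snd (rs ! i))) (snd (snd (rs ! i)))) = 1))"
proof (intro allI impI)
  fix p :: nat assume p: "prime p"
  have Q: "polytope Q" using assms(1) by (simp add: simple_polytope_def)
  have "\<forall>B\<in>reachable_complexes Q. \<exists>v E. free_vertex B v E \<and> gcd p (g_face DIM('a) m F lam E v) = 1"
    using reachable_complex_has_free_vertex_prime_to[OF assms p] by blast
  then obtain rs where rs: "retraction_seq_from (nonempty_faces Q) rs"
      and good: "\<forall>(B, E, b)\<in>set rs. gcd p (g_face DIM('a) m F lam E b) = 1"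
    using exists_retraction_seq_from[OF Q _ reachable_complexes.start,
        where P = "\<lambda>_ E v. gcd p (g_face DIM('a) m F lam E v) = 1"] by blast
  have "retraction_seq Q rs" by (rule retraction_seq_if_from_nonempty_faces[OF Q rs])
  moreover have "gcd p (g_face DIM('a) m F lam (fst (snd (rs ! i))) (snd (snd (rs ! i)))) = 1"
    if "i < length rs" for i
    using good nth_mem[OF that] by (cases "rs ! i") auto
  ultimately show "\<exists>rs. retraction_seq Q rs \<and>
      (\<forall>i<length rs. gcd p (g_face DIM('a) m F lam (fst (snd (rs ! i))) (snd (snd (rs ! i)))) = 1)"
    by blast
qed

end
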